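(* Let $b\ge 2$ and let $N$ be a $b$-wMRH number with $k$ base-$b$ digits and with multiplicative extra term $A\ge 1$. Then $k\le A+4$ if $b\ge 6$, and $k\le A+5$ if $2\le b\le 5$.
   Context: Fix a base $b\ge 2$. $s_b(N)$ is the sum of the base-$b$ digits of $N$. For a positive integer $X$, its reversal $X^R$ is the integer whose base-$b$ representation is that of $X$ written in reverse order (leading zeros of the result are dropped). A positive integer $N$ is a $b$-wMRH number if there exists an integer $A\ge 0$, called a multiplicative extra term of $N$, such that $N=(A+s_b(N))\cdot(A+s_b(N))^R$. *)

theory Defs
  imports Main
begin

fun digits :: "nat \<Rightarrow> nat \<Rightarrow> nat list" where
  "digits b n = (if b < 2 \<or> n = 0 then [] else n mod b # digits b (n div b))"

declare digits.simps[simp del]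

fun from_digits :: "nat \<Rightarrow> nat list \<Rightarrow> nat" where
  "from_digits b [] = 0"
| "from_digits b (d # ds) = d + b * from_digits b ds"

definition digit_sum :: "nat \<Rightarrow> nat \<Rightarrow> nat" where
  "digit_sum b n = sum_list (digits b n)"

definition num_digits :: "nat \<Rightarrow> nat \<Rightarrow> nat" where
  "num_digits b n = length (digits b n)"

text \<open>Reversal: the number whose base-b representation is that of n read backwards
  (leading zeros of the result are automatically dropped).\<close>
definition reversal :: "nat \<Rightarrow> nat \<Rightarrow> nat" where
  "reversal b n = from_digits b (rev (digits b n))"

definition mult_extra_term :: "nat \<Rightarrow> nat \<Rightarrow> nat \<Rightarrow> bool" where
  "mult_extra_term b N A \<longleftrightarrow>
     N = (A + digit_sum b N) * reversal b (A + digit_sum b N)"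

definition wMRH :: "nat \<Rightarrow> nat \<Rightarrow> bool" where
  "wMRH b N \<longleftrightarrow> 0 < N \<and> (\<exists>A. mult_extra_term b N A)"

end

theory Submission
  imports Defs
begin

text \<open>Let \<open>M = A + s(N)\<close> and let \<open>m\<close> be the number of base-\<open>b\<close> digits of \<open>M\<close>. Both \<open>M\<close>
  and its reversal are below \<open>b^m\<close>, so \<open>N = M * M^R\<close> has \<open>k \<le> 2m\<close> digits and
  \<open>s(N) \<le> 2m(b - 1)\<close>. Since also \<open>b^(m - 1) \<le> M\<close>, we get \<open>b^(m - 1) \<le> A + 2m(b - 1)\<close>.
  Whenever \<open>2bm \<le> b^(m - 1) + c\<close> this forces \<open>2m \<le> A + c\<close>; the remaining pairs \<open>(b, m)\<close>
  have \<open>2m\<close> small enough, except \<open>b = 2, m = 4\<close>, where the eight candidates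
  \<open>8 \<le> M < 16\<close> are checked directly.\<close>

lemma length_digits_le_iff:
  assumes "b \<ge> 2"
  shows "length (digits b n) \<le> L \<longleftrightarrow> n < b ^ L"
proof (induction L arbitrary: n)
  case 0
  then show ?case using assms by (subst digits.simps) auto
next
  case (Suc L)
  show ?case
  proof (cases "n = 0")
    case True
    then show ?thesis using assms by (subst digits.simps) auto
  next
    case False
    then have "digits b n = n mod b # digits b (n div b)"
      using assms by (subst digits.simps) auto
    then have "length (digits b n) \<le> Suc L \<longleftrightarrow> n div b < b ^ L"
      using Suc.IH by simp
    also have "\<dots> \<longleftrightarrow> n < b ^ Suc L"
      using assms by (simp add: div_less_iff_less_mult mult.commute)
    finally show ?thesis .
  qed
qed

lemma digits_less_base:
  assumes "b \<ge> 2" "d \<in> set (digits b n)"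
  shows "d < b"
  using assms
proof (induction b n rule: digits.induct)
  case (1 b n)
  show ?case
  proof (cases "n = 0")
    case True
    then show ?thesis using "1.prems" by (subst (asm) digits.simps) auto
  next
    case False
    then have "digits b n = n mod b # digits b (n div b)"
      using "1.prems" by (subst digits.simps) auto
    then show ?thesis using 1 False by auto
  qed
qed

lemma from_digits_less_power:
  assumes "\<forall>d \<in> set ds. d < b"
  shows "from_digits b ds < b ^ length ds"
  using assms
proof (induction ds)
  case Nil
  then show ?case by simp
next
  case (Cons d ds)
  then have "d < b" and "Suc (from_digits b ds) \<le> b ^ length ds" by auto
  then have "d + b * from_digits b ds < b * Suc (from_digits b ds)" by simp
  also have "\<dots> \<le> b * b ^ length ds"
    using \<open>Suc (from_digits b ds) \<le> b ^ length ds\<close> by (rule mult_le_mono2)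
  finally show ?case by simp
qed

lemma num_digits_le_iff: "b \<ge> 2 \<Longrightarrow> num_digits b n \<le> L \<longleftrightarrow> n < b ^ L"
  unfolding num_digits_def by (rule length_digits_le_iff)

lemma less_power_num_digits: "b \<ge> 2 \<Longrightarrow> n < b ^ num_digits b n"
  using num_digits_le_iff by blast

lemma power_num_digits_le:
  assumes "b \<ge> 2" "n > 0"
  shows "b ^ (num_digits b n - 1) \<le> n"
proof -
  have "num_digits b n \<noteq> 0"
    using assms num_digits_le_iff[OF assms(1), of n 0] by simp
  then have "\<not> num_digits b n \<le> num_digits b n - 1" by linarith
  then show ?thesis using num_digits_le_iff[OF assms(1)] by (meson not_less)
qed

lemma digit_sum_le: "b \<ge> 2 \<Longrightarrow> digit_sum b n \<le> num_digits b n * (b - 1)"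
  unfolding digit_sum_def num_digits_def
  using sum_list_mono[of "digits b n" id "\<lambda>_. b - 1"] digits_less_base[of b _ n]
  by (fastforce simp: sum_list_triv)

lemma reversal_less_power: "b \<ge> 2 \<Longrightarrow> reversal b n < b ^ num_digits b n"
  unfolding reversal_def num_digits_def
  using from_digits_less_power[of "rev (digits b n)" b] digits_less_base[of b _ n] by auto

lemma num_digits_mult_reversal_le:
  assumes "b \<ge> 2"
  shows "num_digits b (n * reversal b n) \<le> 2 * num_digits b n"
proof -
  have "n * reversal b n < b ^ num_digits b n * b ^ num_digits b n"
    using assms less_power_num_digits[OF assms] reversal_less_power[OF assms]
    by (intro mult_strict_mono) auto
  then show ?thesis
    using num_digits_le_iff[OF assms] by (simp add: mult_2 power_add)
qed

lemma mult_extra_term_bounds: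
  assumes "b \<ge> 2" "N > 0" "mult_extra_term b N A"
    and "m = num_digits b (A + digit_sum b N)"
  shows "num_digits b N \<le> 2 * m" and "b ^ (m - 1) \<le> A + 2 * m * (b - 1)"
proof -
  define M where "M = A + digit_sum b N"
  have N: "N = M * reversal b M"
    using assms(3) unfolding mult_extra_term_def M_def by simp
  have "num_digits b (M * reversal b M) \<le> 2 * m"
    using num_digits_mult_reversal_le[OF assms(1)] assms(4) M_def by simp
  with N show digits_N: "num_digits b N \<le> 2 * m" by simp
  have "M > 0" using N assms(2) by (cases M) auto
  then have "b ^ (m - 1) \<le> M"
    using power_num_digits_le[OF assms(1)] assms(4) M_def by simp
  also have "\<dots> \<le> A + num_digits b N * (b - 1)"
    using digit_sum_le[OF assms(1)] M_def by simp
  also have "\<dots> \<le> A + 2 * m * (b - 1)"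
    using digits_N by simp
  finally show "b ^ (m - 1) \<le> A + 2 * m * (b - 1)" .
qed

lemma num_digits_le_of_power_growth:
  assumes "b \<ge> 2" "N > 0" "mult_extra_term b N A"
    and "m = num_digits b (A + digit_sum b N)"
    and "2 * b * m \<le> b ^ (m - 1) + c"
  shows "num_digits b N \<le> A + c"
proof -
  have "2 * b * m = 2 * m * (b - 1) + 2 * m"
    using assms(1) by (cases b) (auto simp: algebra_simps)
  then show ?thesis
    using mult_extra_term_bounds[OF assms(1-4)] assms(5) by linarith
qed

lemma double_mult_le_power_mono:
  fixes b m0 m :: nat
  assumes "b \<ge> 2" "1 \<le> m0" "m0 \<le> m" "2 * b * m0 \<le> b ^ (m0 - 1)"
  shows "2 * b * m \<le> b ^ (m - 1)"
  using assms(3)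
proof (induction m rule: dec_induct)
  case base
  then show ?case using assms(4) .
next
  case (step n)
  have "Suc n \<le> b * n"
    using step assms(1,2) mult_le_mono1[of 2 b n] by linarith
  then have "2 * b * Suc n \<le> b * (2 * b * n)"
    by (metis mult.left_commute mult_le_mono2)
  also have "\<dots> \<le> b * b ^ (n - 1)"
    using step.IH by simp
  also have "\<dots> = b ^ (Suc n - 1)"
    using step assms(2) by (cases n) auto
  finally show ?case .
qed

lemma large_base_growth:
  assumes "b \<ge> 6" "m \<ge> 3"
  shows "2 * b * m \<le> b ^ (m - 1)"
proof (rule double_mult_le_power_mono[of b 3])
  show "2 * b * 3 \<le> b ^ (3 - 1)"
    using assms(1) mult_le_mono1[of 6 b b] by (simp add: power2_eq_square)
qed (use assms in auto)

lemma small_base_growth: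
  assumes "2 \<le> b" "b \<le> 5" "m \<ge> 4" "\<not> (b = 2 \<and> m = 4)"
  shows "2 * b * m \<le> b ^ (m - 1) + 5"
proof -
  consider "b \<ge> 3" | "b = 2" "m = 5" | "b = 2" "m \<ge> 6"
    using assms by linarith
  then show ?thesis
  proof cases
    case 1
    have "9 * b \<le> b * b * b"
      using 1 mult_le_mono[of 3 b 3 b] mult_le_mono1[of 9 "b * b" b] by simp
    then have "2 * b * 4 \<le> b ^ (4 - 1)"
      by (simp add: numeral_eq_Suc)
    then show ?thesis
      using double_mult_le_power_mono[of b 4 m] 1 assms(3) by simp
  next
    case 2
    then show ?thesis by simp
  next
    case 3
    then show ?thesis
      using double_mult_le_power_mono[of 2 6 m] by simp
  qed
qed

lemma binary_four_digit_case:
  assumes "mult_extra_term 2 N A" "num_digits 2 (A + digit_sum 2 N) = 4"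
  shows "num_digits 2 N \<le> A + 5"
proof -
  define M where "M = A + digit_sum 2 N"
  have N: "N = M * reversal 2 M"
    using assms(1) unfolding mult_extra_term_def M_def by simp
  have "num_digits 2 0 = 0"
    by (simp add: num_digits_def digits.simps)
  then have "M > 0"
    using assms(2) M_def by (metis gr0I zero_neq_numeral)
  then have "8 \<le> M" "M < 16"
    using power_num_digits_le[of 2 M] less_power_num_digits[of 2 M] assms(2) M_def by auto
  then have "M = 8 \<or> M = 9 \<or> M = 10 \<or> M = 11 \<or> M = 12 \<or> M = 13 \<or> M = 14 \<or> M = 15"
    by linarith
  then have "num_digits 2 N + digit_sum 2 N \<le> M + 5"
    unfolding N
    by (elim disjE) (simp_all add: digit_sum_def num_digits_def reversal_def digits.simps)
  then show ?thesis using M_def by linarith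
qed

theorem mainTheorem19:
  fixes b N A :: nat
  assumes "b \<ge> 2"
    and "wMRH b N"
    and "mult_extra_term b N A"
    and "A \<ge> 1"
  shows "(b \<ge> 6 \<longrightarrow> num_digits b N \<le> A + 4)
       \<and> (b \<le> 5 \<longrightarrow> num_digits b N \<le> A + 5)"
proof -
  define m where "m = num_digits b (A + digit_sum b N)"
  have N: "N > 0" using assms(2) unfolding wMRH_def by simp
  note bounds = mult_extra_term_bounds[OF assms(1) N assms(3) m_def]
  note growth = num_digits_le_of_power_growth[OF assms(1) N assms(3) m_def]
  show ?thesis
  proof (intro conjI impI)
    assume "b \<ge> 6"
    then show "num_digits b N \<le> A + 4"
      using bounds(1) growth[of 0] large_base_growth[of b m] by (cases "m \<ge> 3") auto
  next
    assume "b \<le> 5"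
    consider "m \<le> 3" | "b = 2" "m = 4" | "m \<ge> 4" "\<not> (b = 2 \<and> m = 4)" by linarith
    then show "num_digits b N \<le> A + 5"
    proof cases
      case 1
      then show ?thesis using bounds(1) assms(4) by linarith
    next
      case 2
      then show ?thesis using binary_four_digit_case assms(3) m_def by blast
    next
      case 3
      then show ?thesis using growth small_base_growth assms(1) \<open>b \<le> 5\<close> by blast
    qed
  qed
qed

end
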